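(* Let $d\in\mathbb{N}_+$ and consider percolating homogeneous long-range percolation on $\mathbb{Z}^d$ with non-increasing connection function $\lambda(r)=r^{-d}L(r)$, where $L$ is positive, slowly varying and satisfies $\int_1^\infty L(r)r^{-1}\,dr<\infty$. Then there exists a positive finite constant $a_2$ such that $\limsup_{k\to\infty}(\mathbb{E}|\mathcal{B}_k|)^{1/k}<a_2$ and $$\lim_{k\to\infty}\mathbb{P}(|\mathcal{B}_k|^{1/k}<a_2)=1.$$
   Context: Long-range percolation on $\mathbb{Z}^d$: for each unordered pair of distinct vertices $x,y$, an edge is present independently with probability $1-e^{-\lambda(\|x-y\|)}$, where $\|x\|=\max_i|x_i|$. A function $L$ is slowly varying if $L(cr)/L(r)\to1$ as $r\to\infty$ for all $c>0$. $D(x,y)$ is the graph distance in the resulting random graph and $\mathcal{B}_k=\{y\in\mathbb{Z}^d: D(0,y)\le k\}$. Percolating means the origin lies in an infinite cluster with positive probability. *)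

theory Defs
  imports "HOL-Probability.Probability"
begin

text \<open>Vertices of Z^d are functions from a finite index type 'd (with d = CARD('d) \<ge> 1)
  to int.  Edges are unordered pairs {x,y} with x \<noteq> y.\<close>

definition supnorm :: "('d::finite \<Rightarrow> int) \<Rightarrow> int" where
  "supnorm x = Max (range (\<lambda>i. \<bar>x i\<bar>))"

definition lrp_edges :: "('d::finite \<Rightarrow> int) set set" where
  "lrp_edges = {e. \<exists>x y. x \<noteq> y \<and> e = {x, y}}"

definition edge_len :: "('d::finite \<Rightarrow> int) set \<Rightarrow> int" where
  "edge_len e = (THE n. \<exists>x y. x \<noteq> y \<and> e = {x, y} \<and> n = supnorm (\<lambda>i. x i - y i))"

definition edge_prob :: "(real \<Rightarrow> real) \<Rightarrow> ('d::finite \<Rightarrow> int) set \<Rightarrow> real" where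
  "edge_prob lam e = 1 - exp (- lam (real_of_int (edge_len e)))"

definition lrp :: "(real \<Rightarrow> real) \<Rightarrow> (('d::finite \<Rightarrow> int) set \<Rightarrow> bool) measure" where
  "lrp lam = PiM lrp_edges (\<lambda>e. measure_pmf (bernoulli_pmf (edge_prob lam e)))"

definition adj :: "(('d::finite \<Rightarrow> int) set \<Rightarrow> bool) \<Rightarrow> ('d \<Rightarrow> int) \<Rightarrow> ('d \<Rightarrow> int) \<Rightarrow> bool" where
  "adj \<omega> x y \<longleftrightarrow> x \<noteq> y \<and> \<omega> {x, y}"

definition ball :: "nat \<Rightarrow> (('d::finite \<Rightarrow> int) set \<Rightarrow> bool) \<Rightarrow> ('d \<Rightarrow> int) set" where
  "ball k \<omega> = {y. \<exists>j\<le>k. (adj \<omega> ^^ j) (\<lambda>_. 0) y}"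

definition cluster :: "(('d::finite \<Rightarrow> int) set \<Rightarrow> bool) \<Rightarrow> ('d \<Rightarrow> int) set" where
  "cluster \<omega> = {y. (adj \<omega>)\<^sup>*\<^sup>* (\<lambda>_. 0) y}"

definition ball_size :: "nat \<Rightarrow> (('d::finite \<Rightarrow> int) set \<Rightarrow> bool) \<Rightarrow> ennreal" where
  "ball_size k \<omega> = (if finite (ball k \<omega>) then of_nat (card (ball k \<omega>)) else \<infinity>)"

definition eroot :: "nat \<Rightarrow> ennreal \<Rightarrow> ereal" where
  "eroot k x = (if x = \<infinity> then \<infinity> else ereal (enn2real x powr (1 / real k)))"

definition slowly_varying :: "(real \<Rightarrow> real) \<Rightarrow> bool" where
  "slowly_varying L \<longleftrightarrow> (\<forall>c>0. ((\<lambda>r. L (c * r) / L r) \<longlongrightarrow> 1) at_top)"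

end

theory Submission
  imports Defs
begin

text \<open>
  Both bounds follow from a first moment estimate. A vertex of B_k is the far end of a self-avoiding walk of at most k
  steps to the origin all of whose edges are open, and by independence such a walk is open
  with probability equal to the product of its edge probabilities. Summing over the far end
  first shows that the expected number of open self-avoiding walks with j steps is at most M^j,
  where M = sum_z P({0, z} open) is the expected degree of the origin. M is finite: there are
  O(n^(d-1)) vertices z with ||z|| = n, and sum_n lambda(n) n^(d-1) is dominated by the
  integral of L(r)/r, lambda being non-increasing. Hence E|B_k| <= (M + 1)^k, and Markov's
  inequality gives P(|B_k| >= (M + 2)^k) <= ((M + 1)/(M + 2))^k.
\<close>

section \<open>Walks in a relation\<close>

fun path_edges :: "'a list \<Rightarrow> 'a set set" where
  "path_edges (x # y # xs) = insert {x, y} (path_edges (y # xs))"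
| "path_edges _ = {}"

lemma finite_path_edges [simp]: "finite (path_edges xs)"
  by (induction xs rule: path_edges.induct) auto

lemma path_edges_subset_set: "e \<in> path_edges xs \<Longrightarrow> e \<subseteq> set xs"
  by (induction xs rule: path_edges.induct) auto

lemma relpowp_imp_distinct_path:
  assumes "(R ^^ j) a b"
  shows "\<exists>xs. xs \<noteq> [] \<and> hd xs = b \<and> last xs = a \<and> distinct xs \<and> successively R\<inverse>\<inverse> xs
           \<and> length xs \<le> Suc j"
  using assms
proof (induction j arbitrary: b)
  case 0
  then show ?case by (intro exI[of _ "[b]"]) auto
next
  case (Suc j)
  then obtain c where "(R ^^ j) a c" "R c b" by auto
  with Suc.IH obtain xs where xs: "xs \<noteq> []" "hd xs = c" "last xs = a" "distinct xs"
      "successively R\<inverse>\<inverse> xs" "length xs \<le> Suc j" by blast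
  show ?case
  proof (cases "b \<in> set xs")
    case True
    \<comment> \<open>erase the loop through b by cutting the walk at its earlier visit to b\<close>
    then obtain ys zs where "xs = ys @ b # zs" by (meson split_list)
    then show ?thesis using xs by (intro exI[of _ "b # zs"]) (auto simp: successively_append_iff)
  next
    case False
    then show ?thesis using xs \<open>R c b\<close> by (intro exI[of _ "b # xs"]) (cases xs, auto)
  qed
qed

lemma successively_imp_relpowp:
  "successively R\<inverse>\<inverse> xs \<Longrightarrow> xs \<noteq> [] \<Longrightarrow> (R ^^ (length xs - 1)) (last xs) (hd xs)"
  by (induction xs rule: induct_list012) (auto intro: relpowp_Suc_I)

lemma borel_measurable_nn_integral_count_space:
  fixes f :: "'a \<Rightarrow> 'b::countable \<Rightarrow> ennreal"
  assumes "\<And>y. (\<lambda>x. f x y) \<in> borel_measurable M"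
  shows "(\<lambda>x. \<integral>\<^sup>+y. f x y \<partial>count_space UNIV) \<in> borel_measurable M"
proof (cases "finite (UNIV :: 'b set)")
  case True
  then show ?thesis using assms by (simp add: nn_integral_count_space_finite)
next
  case False
  note bij = bij_betw_from_nat_into[OF countableI_type False]
  have "(\<lambda>x. \<integral>\<^sup>+y. f x y \<partial>count_space UNIV) = (\<lambda>x. \<Sum>n. f x (from_nat_into UNIV n))"
    by (simp add: nn_integral_bij_count_space[symmetric, OF bij] nn_integral_count_space_nat)
  then show ?thesis using assms by simp
qed

lemma emeasure_count_space_image_le: "emeasure (count_space UNIV) (f ` A) \<le> emeasure (count_space UNIV) A"
  by (cases "finite A") (simp_all add: card_image_le)

lemma nn_integral_count_space_Cons:
  fixes f :: "'a::countable list \<Rightarrow> ennreal"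
  shows "(\<integral>\<^sup>+xs. f xs \<partial>count_space UNIV)
    = f [] + (\<integral>\<^sup>+ys. \<integral>\<^sup>+x. f (x # ys) \<partial>count_space UNIV \<partial>count_space UNIV)"
proof -
  \<comment> \<open>the double sum ?C picks out each nonempty list exactly once\<close>
  let ?C = "\<lambda>xs. \<integral>\<^sup>+ys. \<integral>\<^sup>+x. f (x # ys) * indicator {x # ys} xs \<partial>count_space UNIV \<partial>count_space UNIV"
  have C_Cons: "?C (a # as) = f (a # as)" for a as
  proof -
    have "?C (a # as) = (\<integral>\<^sup>+ys. \<integral>\<^sup>+x. (f (x # ys) * indicator {as} ys) * indicator {a} x
        \<partial>count_space UNIV \<partial>count_space UNIV)"
      by (intro nn_integral_cong) (simp split: split_indicator)
    also have "\<dots> = (\<integral>\<^sup>+ys. f (a # ys) * indicator {as} ys \<partial>count_space UNIV)"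
      by (simp add: nn_integral_indicator_singleton)
    also have "\<dots> = f (a # as)"
      by (simp add: nn_integral_indicator_singleton)
    finally show ?thesis .
  qed
  have split: "f xs = f [] * indicator {[]} xs + ?C xs" for xs
    by (cases xs) (simp_all add: C_Cons)
  have "(\<integral>\<^sup>+xs. f xs \<partial>count_space UNIV)
      = (\<integral>\<^sup>+xs. f [] * indicator {[]} xs + ?C xs \<partial>count_space UNIV)"
    by (subst split) rule
  also have "\<dots> = f [] + (\<integral>\<^sup>+xs. ?C xs \<partial>count_space UNIV)"
    by (subst nn_integral_add) (auto simp: nn_integral_cmult_indicator)
  also have "(\<integral>\<^sup>+xs. ?C xs \<partial>count_space UNIV)
      = (\<integral>\<^sup>+ys. \<integral>\<^sup>+xs. \<integral>\<^sup>+x. f (x # ys) * indicator {x # ys} xs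
          \<partial>count_space UNIV \<partial>count_space UNIV \<partial>count_space UNIV)"
    by (rule nn_integral_count_space_nn_integral) auto
  also have "\<dots> = (\<integral>\<^sup>+ys. \<integral>\<^sup>+x. \<integral>\<^sup>+xs. f (x # ys) * indicator {x # ys} xs
          \<partial>count_space UNIV \<partial>count_space UNIV \<partial>count_space UNIV)"
    by (intro nn_integral_cong nn_integral_count_space_nn_integral) auto
  also have "\<dots> = (\<integral>\<^sup>+ys. \<integral>\<^sup>+x. f (x # ys) \<partial>count_space UNIV \<partial>count_space UNIV)"
    by (simp add: nn_integral_cmult_indicator)
  finally show ?thesis .
qed

lemma sum_power_le_Suc_power:
  fixes m :: real
  assumes "0 \<le> m"
  shows "(\<Sum>j\<le>k. m ^ j) \<le> (m + 1) ^ k"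
  unfolding binomial_ring
proof (intro sum_mono)
  fix j assume "j \<in> {..k}"
  then have "1 \<le> real (k choose j)" by (simp add: Suc_le_eq)
  then show "m ^ j \<le> of_nat (k choose j) * m ^ j * 1 ^ (k - j)"
    using assms by (simp add: mult_le_cancel_right1)
qed

lemma power_diff_le:
  fixes a b :: real
  assumes "0 \<le> b" "b \<le> a"
  shows "a ^ Suc d - b ^ Suc d \<le> real (Suc d) * (a - b) * a ^ d"
proof (induction d)
  case (Suc d)
  have "a ^ Suc (Suc d) - b ^ Suc (Suc d) = a * (a ^ Suc d - b ^ Suc d) + (a - b) * b ^ Suc d"
    by (simp add: algebra_simps)
  also have "\<dots> \<le> a * (real (Suc d) * (a - b) * a ^ d) + (a - b) * a ^ Suc d"
    using Suc.IH assms by (intro add_mono mult_left_mono power_mono) auto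
  also have "\<dots> = real (Suc (Suc d)) * (a - b) * a ^ Suc d"
    by (simp add: algebra_simps)
  finally show ?case .
qed simp

lemma summable_of_le_integral:
  fixes b :: "nat \<Rightarrow> real" and g :: "real \<Rightarrow> real"
  assumes b_nonneg: "\<And>m. 0 \<le> b m"
    and b_le: "\<And>m r. real m + 1 \<le> r \<Longrightarrow> r < real m + 2 \<Longrightarrow> b m \<le> g r"
    and g_int: "(\<integral>\<^sup>+r. ennreal (g r) * indicator {1..} r \<partial>lborel) < \<infinity>"
  shows "summable b"
proof -
  define step where "step r = (\<Sum>m. ennreal (b m) * indicator {real m + 1..<real m + 2} r)" for r
  have "(\<Sum>m. ennreal (b m)) = (\<Sum>m. \<integral>\<^sup>+r. ennreal (b m) * indicator {real m + 1..<real m + 2} r \<partial>lborel)"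
    by (simp add: nn_integral_cmult_indicator)
  also have "\<dots> = (\<integral>\<^sup>+r. step r \<partial>lborel)"
    unfolding step_def by (rule nn_integral_suminf[symmetric]) simp
  also have "\<dots> \<le> (\<integral>\<^sup>+r. ennreal (g r) * indicator {1..} r \<partial>lborel)"
  proof (rule nn_integral_mono)
    fix r :: real
    show "step r \<le> ennreal (g r) * indicator {1..} r"
    proof (cases "1 \<le> r")
      case True
      define m where "m = nat \<lfloor>r\<rfloor> - 1"
      have "r \<in> {real m' + 1..<real m' + 2} \<longleftrightarrow> m' = m" for m'
        using True unfolding m_def by (simp add: floor_eq_iff) linarith
      then have "step r = (\<Sum>m'. if m' = m then ennreal (b m) else 0)"
        unfolding step_def by (intro suminf_cong) (simp add: indicator_def)
      also have "\<dots> = ennreal (b m)"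
        using sums_single[of m "\<lambda>_. ennreal (b m)"] by (simp add: sums_iff)
      also have "\<dots> \<le> ennreal (g r)"
        using True unfolding m_def by (intro ennreal_leI b_le) linarith+
      finally show ?thesis using True by simp
    qed (simp add: step_def indicator_def)
  qed
  finally have "(\<Sum>m. ennreal (b m)) \<noteq> \<top>"
    using g_int by (auto simp: top_unique)
  then show ?thesis by (rule summable_suminf_not_top[OF b_nonneg])
qed

section \<open>Cubes and shells in the lattice\<close>

lemma supnorm_ge: "\<bar>z i\<bar> \<le> supnorm z"
  unfolding supnorm_def by (rule Max_ge) auto

lemma supnorm_le_iff: "supnorm z \<le> n \<longleftrightarrow> (\<forall>i. \<bar>z i\<bar> \<le> n)"
  unfolding supnorm_def by (subst Max_le_iff) auto

lemma supnorm_nonneg: "0 \<le> supnorm z"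
  using supnorm_ge[of z] abs_ge_zero order_trans by blast

lemma supnorm_pos: "z \<noteq> (\<lambda>_. 0) \<Longrightarrow> 0 < supnorm z"
proof -
  assume "z \<noteq> (\<lambda>_. 0)"
  then obtain i where "z i \<noteq> 0" by auto
  then show ?thesis using supnorm_ge[of z i] by linarith
qed

lemma supnorm_minus_commute: "supnorm (x - y) = supnorm (y - x)"
  unfolding supnorm_def by (simp add: abs_minus_commute)

definition cube :: "int \<Rightarrow> ('d::finite \<Rightarrow> int) set" where
  "cube n = {z. supnorm z \<le> n}"

definition shell :: "nat \<Rightarrow> ('d::finite \<Rightarrow> int) set" where
  "shell n = {z. supnorm z = int n}"

lemma cube_eq_PiE: "cube n = (\<Pi>\<^sub>E i\<in>(UNIV::'d::finite set). {-n..n})"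
  unfolding cube_def supnorm_le_iff by (auto simp: PiE_iff abs_le_iff) (use minus_le_iff in blast)+

lemma finite_cube [simp]: "finite (cube n)"
  unfolding cube_eq_PiE by (rule finite_PiE) auto

lemma card_cube: "0 \<le> n \<Longrightarrow> card (cube n :: ('d::finite \<Rightarrow> int) set) = nat (2 * n + 1) ^ CARD('d)"
  unfolding cube_eq_PiE by (simp add: card_PiE)

lemma finite_shell [simp]: "finite (shell n)"
  by (rule finite_subset[OF _ finite_cube[of "int n"]]) (auto simp: shell_def cube_def)

lemma card_shell_le:
  assumes "1 \<le> n"
  shows "real (card (shell n :: ('d::finite \<Rightarrow> int) set))
    \<le> 2 * real CARD('d) * (2 * real n + 1) ^ (CARD('d) - 1)"
proof -
  let ?d = "CARD('d)"
  have sub: "cube (int n - 1) \<subseteq> (cube (int n) :: ('d \<Rightarrow> int) set)"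
    by (auto simp: cube_def)
  have "shell n = cube (int n) - (cube (int n - 1) :: ('d \<Rightarrow> int) set)"
    by (auto simp: shell_def cube_def)
  moreover have "nat (2 * int n + 1) = 2 * n + 1" "nat (2 * int n - 1) = 2 * n - 1"
    using assms by (auto simp: nat_eq_iff of_nat_diff)
  ultimately have "card (shell n :: ('d \<Rightarrow> int) set) = (2 * n + 1) ^ ?d - (2 * n - 1) ^ ?d"
    using assms by (simp add: card_Diff_subset[OF finite_cube sub] card_cube)
  also have "real \<dots> = (2 * real n + 1) ^ ?d - (2 * real n - 1) ^ ?d"
    using assms power_mono[of "2 * n - 1" "2 * n + 1" ?d] by (simp add: of_nat_diff add.commute)
  also have "\<dots> \<le> real ?d * ((2 * real n + 1) - (2 * real n - 1)) * (2 * real n + 1) ^ (?d - 1)"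
    using power_diff_le[of "2 * real n - 1" "2 * real n + 1" "?d - 1"] assms by simp
  finally show ?thesis by simp
qed

section \<open>Balls as unions of open paths\<close>

lemma edge_len_doubleton:
  fixes x y :: "'d::finite \<Rightarrow> int"
  assumes "x \<noteq> y"
  shows "edge_len {x, y} = supnorm (x - y)"
  unfolding edge_len_def
proof (rule the_equality)
  show "\<exists>x' y'. x' \<noteq> y' \<and> {x, y} = {x', y'} \<and> supnorm (x - y) = supnorm (\<lambda>i. x' i - y' i)"
    using assms by (intro exI[of _ x] exI[of _ y]) (simp add: fun_diff_def)
next
  fix n assume "\<exists>x' y'. x' \<noteq> y' \<and> {x, y} = {x', y'} \<and> n = supnorm (\<lambda>i. x' i - y' i)"
  then obtain x' y' where "{x, y} = {x', y'}" "n = supnorm (x' - y')"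
    by (auto simp: fun_diff_def)
  then show "n = supnorm (x - y)"
    by (auto simp: doubleton_eq_iff supnorm_minus_commute)
qed

lemma edge_prob_nonneg_le_1:
  assumes "\<forall>r>0. 0 \<le> lam r" and "e \<in> lrp_edges"
  shows "0 \<le> edge_prob lam e \<and> edge_prob lam e \<le> 1"
proof -
  obtain x y where "x \<noteq> y" "e = {x, y}" using assms(2) by (auto simp: lrp_edges_def)
  moreover have "x - y \<noteq> (\<lambda>_. 0)" using \<open>x \<noteq> y\<close> by (auto simp: fun_eq_iff)
  ultimately have "0 < edge_len e" by (simp add: edge_len_doubleton supnorm_pos)
  then show ?thesis using assms(1) by (simp add: edge_prob_def)
qed

lemma path_edges_subset_lrp_edges: "distinct xs \<Longrightarrow> path_edges xs \<subseteq> lrp_edges"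
  by (induction xs rule: path_edges.induct) (auto simp: lrp_edges_def)

lemma conversep_adj [simp]: "(adj \<omega>)\<inverse>\<inverse> = adj \<omega>"
  by (intro ext) (auto simp: adj_def insert_commute)

lemma successively_adj_iff: "distinct xs \<Longrightarrow> successively (adj \<omega>) xs \<longleftrightarrow> (\<forall>e\<in>path_edges xs. \<omega> e)"
  by (induction xs rule: path_edges.induct) (auto simp: adj_def)

text \<open>Walks are listed from their far end to the origin, so that extending a walk is a Cons.\<close>

definition saw :: "nat \<Rightarrow> ('d::finite \<Rightarrow> int) list set" where
  "saw j = {xs. length xs = Suc j \<and> last xs = (\<lambda>_. 0) \<and> distinct xs}"

lemma mem_ball_iff: "y \<in> ball k \<omega> \<longleftrightarrow> (\<exists>j\<le>k. \<exists>xs\<in>saw j. hd xs = y \<and> successively (adj \<omega>) xs)"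
proof
  assume "y \<in> ball k \<omega>"
  then obtain j where "j \<le> k" "(adj \<omega> ^^ j) (\<lambda>_. 0) y" by (auto simp: ball_def)
  then obtain xs where xs: "xs \<noteq> []" "hd xs = y" "last xs = (\<lambda>_. 0)" "distinct xs"
      "successively (adj \<omega>) xs" "length xs \<le> Suc j"
    using relpowp_imp_distinct_path[where R = "adj \<omega>"] by (metis conversep_adj)
  then have "xs \<in> saw (length xs - 1)" "length xs - 1 \<le> k" using \<open>j \<le> k\<close> by (auto simp: saw_def)
  with xs show "\<exists>j\<le>k. \<exists>xs\<in>saw j. hd xs = y \<and> successively (adj \<omega>) xs" by blast
next
  assume "\<exists>j\<le>k. \<exists>xs\<in>saw j. hd xs = y \<and> successively (adj \<omega>) xs"
  then obtain j xs where j: "j \<le> k" and xs: "xs \<in> saw j" "hd xs = y" "successively (adj \<omega>) xs"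
    by blast
  then have "xs \<noteq> []" "length xs - 1 = j" "last xs = (\<lambda>_. 0)" by (auto simp: saw_def)
  then have "(adj \<omega> ^^ j) (\<lambda>_. 0) y"
    using successively_imp_relpowp[where R = "adj \<omega>" and xs = xs] xs by simp
  then show "y \<in> ball k \<omega>" using j by (auto simp: ball_def)
qed

lemma prob_space_lrp: "prob_space (lrp lam)"
  unfolding lrp_def by (rule prob_space_PiM) (rule prob_space_measure_pmf)

definition open_edges :: "(real \<Rightarrow> real) \<Rightarrow> ('d::finite \<Rightarrow> int) set set \<Rightarrow> (('d \<Rightarrow> int) set \<Rightarrow> bool) set"
  where "open_edges lam F = {\<omega> \<in> space (lrp lam). \<forall>e\<in>F. \<omega> e}"

lemma open_edges_eq_prod_emb:
  assumes "F \<subseteq> lrp_edges"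
  shows "open_edges lam F
    = prod_emb lrp_edges (\<lambda>e. measure_pmf (bernoulli_pmf (edge_prob lam e))) F (\<Pi>\<^sub>E e\<in>F. {True})"
proof -
  have "restrict \<omega> F \<in> (\<Pi>\<^sub>E e\<in>F. {True}) \<longleftrightarrow> (\<forall>e\<in>F. \<omega> e)" for \<omega> :: "_ \<Rightarrow> bool"
    by (simp only: restrict_PiE_iff) simp
  then show ?thesis unfolding open_edges_def lrp_def prod_emb_def space_PiM by blast
qed

lemma sets_open_edges: "finite F \<Longrightarrow> F \<subseteq> lrp_edges \<Longrightarrow> open_edges lam F \<in> sets (lrp lam)"
  unfolding lrp_def open_edges_eq_prod_emb[unfolded lrp_def] by (rule sets_PiM_I) auto

lemma emeasure_open_edges:
  assumes "finite F" "F \<subseteq> lrp_edges" "\<forall>r>0. 0 \<le> lam r"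
  shows "emeasure (lrp lam) (open_edges lam F) = (\<Prod>e\<in>F. ennreal (edge_prob lam e))"
proof -
  have "emeasure (lrp lam) (open_edges lam F)
      = (\<Prod>e\<in>F. emeasure (measure_pmf (bernoulli_pmf (edge_prob lam e))) {True})"
    unfolding open_edges_eq_prod_emb[OF assms(2)] lrp_def
    by (rule emeasure_PiM_emb) (auto simp: assms prob_space_measure_pmf)
  also have "\<dots> = (\<Prod>e\<in>F. ennreal (edge_prob lam e))"
  proof (intro prod.cong refl)
    fix e assume "e \<in> F"
    then have "0 \<le> edge_prob lam e \<and> edge_prob lam e \<le> 1"
      using assms(2,3) by (intro edge_prob_nonneg_le_1) auto
    then show "emeasure (measure_pmf (bernoulli_pmf (edge_prob lam e))) {True} = ennreal (edge_prob lam e)"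
      by (simp add: emeasure_pmf_single)
  qed
  finally show ?thesis .
qed

lemma mem_open_edges_path_iff:
  "\<omega> \<in> space (lrp lam) \<Longrightarrow> distinct xs
    \<Longrightarrow> \<omega> \<in> open_edges lam (path_edges xs) \<longleftrightarrow> successively (adj \<omega>) xs"
  by (simp add: open_edges_def successively_adj_iff)

lemma ball_event_eq:
  "{\<omega> \<in> space (lrp lam). y \<in> ball k \<omega>}
    = (\<Union>j\<le>k. \<Union>xs\<in>{xs \<in> saw j. hd xs = y}. open_edges lam (path_edges xs))"
proof (intro set_eqI iffI)
  fix \<omega> assume "\<omega> \<in> {\<omega> \<in> space (lrp lam). y \<in> ball k \<omega>}"
  then obtain j xs where "\<omega> \<in> space (lrp lam)" "j \<le> k" "xs \<in> saw j" "hd xs = y"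
      "successively (adj \<omega>) xs"
    by (auto simp: mem_ball_iff)
  then show "\<omega> \<in> (\<Union>j\<le>k. \<Union>xs\<in>{xs \<in> saw j. hd xs = y}. open_edges lam (path_edges xs))"
    by (intro UN_I[of j] UN_I[of xs]) (auto simp: saw_def mem_open_edges_path_iff)
next
  fix \<omega> assume "\<omega> \<in> (\<Union>j\<le>k. \<Union>xs\<in>{xs \<in> saw j. hd xs = y}. open_edges lam (path_edges xs))"
  then obtain j xs where jxs: "j \<le> k" "xs \<in> saw j" "hd xs = y" "\<omega> \<in> open_edges lam (path_edges xs)"
    by blast
  then have "\<omega> \<in> space (lrp lam)" by (simp add: open_edges_def)
  with jxs have "successively (adj \<omega>) xs" by (simp add: saw_def mem_open_edges_path_iff)
  with jxs \<open>\<omega> \<in> space (lrp lam)\<close> show "\<omega> \<in> {\<omega> \<in> space (lrp lam). y \<in> ball k \<omega>}"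
    unfolding mem_ball_iff by blast
qed

lemma sets_ball_event: "{\<omega> \<in> space (lrp lam). y \<in> ball k \<omega>} \<in> sets (lrp lam)"
  unfolding ball_event_eq
  by (rule sets.finite_UN[OF finite_atMost], rule sets.countable_UN')
    (auto simp: saw_def intro!: countableI_type sets_open_edges path_edges_subset_lrp_edges)

lemma ball_size_eq_emeasure: "ball_size k \<omega> = emeasure (count_space UNIV) (ball k \<omega>)"
  by (simp add: ball_size_def)

lemma borel_measurable_ball_size [measurable]: "ball_size k \<in> borel_measurable (lrp lam)"
  unfolding ball_size_eq_emeasure nn_integral_indicator[OF sets_UNIV, symmetric]
proof (rule borel_measurable_nn_integral_count_space)
  fix y :: "'d::finite \<Rightarrow> int"
  have "(\<lambda>\<omega>. indicator {\<omega> \<in> space (lrp lam). y \<in> ball k \<omega>} \<omega> :: ennreal) \<in> borel_measurable (lrp lam)"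
    using sets_ball_event by (rule borel_measurable_indicator)
  then show "(\<lambda>\<omega>. indicator (ball k \<omega>) y :: ennreal) \<in> borel_measurable (lrp lam)"
    by (rule measurable_cong[THEN iffD1, rotated]) (simp add: indicator_def)
qed

section \<open>First moment of the ball size\<close>

definition path_prob :: "(real \<Rightarrow> real) \<Rightarrow> ('d::finite \<Rightarrow> int) list \<Rightarrow> ennreal" where
  "path_prob lam xs = (\<Prod>e\<in>path_edges xs. ennreal (edge_prob lam e))"

definition expected_open_saws :: "(real \<Rightarrow> real) \<Rightarrow> 'd::finite itself \<Rightarrow> nat \<Rightarrow> ennreal" where
  "expected_open_saws lam _ j
    = (\<integral>\<^sup>+xs. path_prob lam xs * indicator (saw j :: ('d \<Rightarrow> int) list set) xs \<partial>count_space UNIV)"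

lemma ball_size_le_open_saws:
  fixes \<omega> :: "('d::finite \<Rightarrow> int) set \<Rightarrow> bool"
  assumes "\<omega> \<in> space (lrp lam)"
  shows "ball_size k \<omega>
    \<le> (\<Sum>j\<le>k. \<integral>\<^sup>+xs. indicator (saw j) xs * indicator (open_edges lam (path_edges xs)) \<omega>
          \<partial>count_space UNIV)"
proof -
  define S :: "('d \<Rightarrow> int) list set" where "S = {xs. \<exists>j\<le>k. xs \<in> saw j \<and> \<omega> \<in> open_edges lam (path_edges xs)}"
  have "ball k \<omega> = hd ` S"
    using assms by (auto simp: S_def mem_ball_iff saw_def mem_open_edges_path_iff) blast+
  then have "ball_size k \<omega> \<le> emeasure (count_space UNIV) S"
    using emeasure_count_space_image_le[of hd S] by (simp add: ball_size_eq_emeasure)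
  also have "\<dots> = (\<integral>\<^sup>+xs. indicator S xs \<partial>count_space UNIV)"
    by simp
  also have "\<dots> \<le> (\<integral>\<^sup>+xs. (\<Sum>j\<le>k. indicator (saw j) xs * indicator (open_edges lam (path_edges xs)) \<omega>)
      \<partial>count_space UNIV)"
  proof (rule nn_integral_mono)
    fix xs :: "('d \<Rightarrow> int) list"
    show "indicator S xs
      \<le> (\<Sum>j\<le>k. indicator (saw j) xs * indicator (open_edges lam (path_edges xs)) \<omega> :: ennreal)"
    proof (cases "xs \<in> S")
      case True
      then obtain j where "j \<le> k" "xs \<in> saw j" "\<omega> \<in> open_edges lam (path_edges xs)"
        by (auto simp: S_def)
      then show ?thesis
        using True member_le_sum[of j "{..k}" "\<lambda>j. indicator (saw j) xs * indicator (open_edges lam (path_edges xs)) \<omega> :: ennreal"]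
        by simp
    qed simp
  qed
  also have "\<dots> = (\<Sum>j\<le>k. \<integral>\<^sup>+xs. indicator (saw j) xs * indicator (open_edges lam (path_edges xs)) \<omega>
      \<partial>count_space UNIV)"
    by (rule nn_integral_sum) simp
  finally show ?thesis .
qed

lemma nn_integral_ball_size_le_sum:
  assumes "\<forall>r>0. 0 \<le> lam r"
  shows "(\<integral>\<^sup>+\<omega>. ball_size k (\<omega> :: ('d::finite \<Rightarrow> int) set \<Rightarrow> bool) \<partial>lrp lam)
    \<le> (\<Sum>j\<le>k. expected_open_saws lam TYPE('d) j)"
proof -
  let ?X = "\<lambda>j (xs :: ('d \<Rightarrow> int) list) \<omega>. indicator (saw j) xs * indicator (open_edges lam (path_edges xs)) \<omega> :: ennreal"
  have meas: "?X j xs \<in> borel_measurable (lrp lam)" for j xs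
    by (cases "xs \<in> saw j")
      (auto simp: saw_def intro!: borel_measurable_indicator sets_open_edges path_edges_subset_lrp_edges)
  have prob: "(\<integral>\<^sup>+\<omega>. ?X j xs \<omega> \<partial>lrp lam) = path_prob lam xs * indicator (saw j) xs" for j xs
  proof (cases "xs \<in> saw j")
    case True
    then have "distinct xs" by (simp add: saw_def)
    then show ?thesis using True assms
      by (simp add: nn_integral_cmult_indicator sets_open_edges path_edges_subset_lrp_edges
          emeasure_open_edges path_prob_def)
  qed simp
  have "(\<integral>\<^sup>+\<omega>. ball_size k (\<omega> :: ('d \<Rightarrow> int) set \<Rightarrow> bool) \<partial>lrp lam)
      \<le> (\<integral>\<^sup>+\<omega>. (\<Sum>j\<le>k. \<integral>\<^sup>+xs. ?X j xs \<omega> \<partial>count_space UNIV) \<partial>lrp lam)"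
    by (rule nn_integral_mono) (rule ball_size_le_open_saws)
  also have "\<dots> = (\<Sum>j\<le>k. \<integral>\<^sup>+\<omega>. \<integral>\<^sup>+xs. ?X j xs \<omega> \<partial>count_space UNIV \<partial>lrp lam)"
    using meas by (intro nn_integral_sum borel_measurable_nn_integral_count_space)
  also have "\<dots> = (\<Sum>j\<le>k. \<integral>\<^sup>+xs. \<integral>\<^sup>+\<omega>. ?X j xs \<omega> \<partial>lrp lam \<partial>count_space UNIV)"
    using meas by (intro sum.cong refl nn_integral_count_space_nn_integral) simp_all
  also have "\<dots> = (\<Sum>j\<le>k. expected_open_saws lam TYPE('d) j)"
    by (simp add: prob expected_open_saws_def)
  finally show ?thesis .
qed

definition origin_edge_prob :: "(real \<Rightarrow> real) \<Rightarrow> ('d::finite \<Rightarrow> int) \<Rightarrow> ennreal" where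
  "origin_edge_prob lam z = (if z = (\<lambda>_. 0) then 0 else ennreal (1 - exp (- lam (real_of_int (supnorm z)))))"

definition expected_degree :: "(real \<Rightarrow> real) \<Rightarrow> 'd::finite itself \<Rightarrow> ennreal" where
  "expected_degree lam _ = (\<integral>\<^sup>+z. origin_edge_prob lam (z :: 'd \<Rightarrow> int) \<partial>count_space UNIV)"

lemma nn_integral_origin_edge_prob_translate:
  fixes y :: "'d::finite \<Rightarrow> int"
  shows "(\<integral>\<^sup>+x. origin_edge_prob lam (x - y) \<partial>count_space UNIV) = expected_degree lam TYPE('d)"
proof -
  have "bij_betw (\<lambda>x. x - y) UNIV (UNIV :: ('d \<Rightarrow> int) set)"
    by (rule bij_betwI[where g = "\<lambda>z i. z i + y i"]) auto
  then show ?thesis unfolding expected_degree_def by (rule nn_integral_bij_count_space)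
qed

lemma path_prob_Cons_Cons:
  assumes "distinct (x # y # ys)"
  shows "path_prob lam (x # y # ys) = origin_edge_prob lam (x - y) * path_prob lam (y # ys)"
proof -
  have "{x, y} \<notin> path_edges (y # ys)" using assms path_edges_subset_set by fastforce
  moreover have "x - y \<noteq> (\<lambda>_. 0)" using assms by (auto simp: fun_eq_iff)
  ultimately show ?thesis
    using assms by (simp add: path_prob_def origin_edge_prob_def edge_prob_def edge_len_doubleton)
qed

lemma path_prob_saw_Suc_le:
  "path_prob lam (x # ys) * indicator (saw (Suc j)) (x # ys)
    \<le> origin_edge_prob lam (x - hd ys) * (path_prob lam ys * indicator (saw j) ys)"
proof (cases "x # ys \<in> saw (Suc j)")
  case True
  then obtain y zs where "ys = y # zs" by (cases ys) (auto simp: saw_def)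
  with True show ?thesis by (simp add: path_prob_Cons_Cons saw_def)
qed simp

lemma expected_open_saws_0: "expected_open_saws lam TYPE('d::finite) 0 = 1"
proof -
  have "saw 0 = {[(\<lambda>_. 0) :: 'd \<Rightarrow> int]}" by (auto simp: saw_def length_Suc_conv)
  then show ?thesis by (simp add: expected_open_saws_def path_prob_def)
qed

lemma expected_open_saws_Suc_le:
  "expected_open_saws lam TYPE('d::finite) (Suc j) \<le> expected_degree lam TYPE('d) * expected_open_saws lam TYPE('d) j"
proof -
  let ?w = "\<lambda>ys :: ('d \<Rightarrow> int) list. path_prob lam ys * indicator (saw j) ys"
  have "expected_open_saws lam TYPE('d) (Suc j)
      = (\<integral>\<^sup>+ys. \<integral>\<^sup>+x. path_prob lam (x # ys) * indicator (saw (Suc j)) (x # ys :: ('d \<Rightarrow> int) list)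
          \<partial>count_space UNIV \<partial>count_space UNIV)"
    unfolding expected_open_saws_def by (subst nn_integral_count_space_Cons) (simp add: saw_def)
  also have "\<dots> \<le> (\<integral>\<^sup>+ys. \<integral>\<^sup>+x. origin_edge_prob lam (x - hd ys) * ?w ys \<partial>count_space UNIV \<partial>count_space UNIV)"
    by (intro nn_integral_mono path_prob_saw_Suc_le)
  also have "\<dots> = (\<integral>\<^sup>+ys. expected_degree lam TYPE('d) * ?w ys \<partial>count_space UNIV)"
    by (simp add: nn_integral_multc nn_integral_origin_edge_prob_translate)
  also have "\<dots> = expected_degree lam TYPE('d) * expected_open_saws lam TYPE('d) j"
    by (simp add: nn_integral_cmult expected_open_saws_def)
  finally show ?thesis .
qed

lemma expected_open_saws_le_power: "expected_open_saws lam TYPE('d::finite) j \<le> expected_degree lam TYPE('d) ^ j"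
proof (induction j)
  case (Suc j)
  have "expected_open_saws lam TYPE('d) (Suc j) \<le> expected_degree lam TYPE('d) * expected_open_saws lam TYPE('d) j"
    by (rule expected_open_saws_Suc_le)
  also have "\<dots> \<le> expected_degree lam TYPE('d) * expected_degree lam TYPE('d) ^ j"
    by (intro mult_left_mono Suc.IH) simp
  finally show ?case by simp
qed (simp add: expected_open_saws_0)

section \<open>Finiteness of the expected degree\<close>

lemma summable_lam_times_power:
  fixes lam L :: "real \<Rightarrow> real" and d :: nat
  assumes L_pos: "\<forall>r>0. L r > 0"
    and L_int: "(\<integral>\<^sup>+ r. ennreal (L r / r) * indicator {1..} r \<partial>lborel) < \<infinity>"
    and lam_def: "\<forall>r>0. lam r = r powr (- real d) * L r"
    and lam_noninc: "\<forall>r s. 0 < r \<longrightarrow> r \<le> s \<longrightarrow> lam s \<le> lam r"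
    and d_pos: "1 \<le> d"
  shows "summable (\<lambda>m. lam (real m + 2) * (real m + 1) ^ (d - 1))"
proof -
  have lam_nonneg: "0 \<le> lam r" if "0 < r" for r
    using that L_pos lam_def by (simp add: less_imp_le)
  have L_div: "L r / r = lam r * r ^ (d - 1)" if "0 < r" for r
  proof -
    have "r powr (- real d) * r ^ (d - 1) = r powr (- real d) * r powr (real d - 1)"
      using that d_pos by (simp add: powr_realpow[symmetric] of_nat_diff)
    also have "\<dots> = inverse r"
      using that by (simp add: powr_diff powr_minus field_simps)
    finally show ?thesis
      using that lam_def by (simp add: divide_inverse mult.commute mult.left_commute)
  qed
  show ?thesis
  proof (rule summable_of_le_integral[OF _ _ L_int])
    fix m :: nat
    show "0 \<le> lam (real m + 2) * (real m + 1) ^ (d - 1)"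
      using lam_nonneg[of "real m + 2"] by simp
    fix r :: real assume r: "real m + 1 \<le> r" "r < real m + 2"
    have "lam (real m + 2) \<le> lam r" using lam_noninc r by simp
    moreover have "(real m + 1) ^ (d - 1) \<le> r ^ (d - 1)" using r by (intro power_mono) auto
    ultimately have "lam (real m + 2) * (real m + 1) ^ (d - 1) \<le> lam r * r ^ (d - 1)"
      using lam_nonneg[of r] r by (intro mult_mono) auto
    then show "lam (real m + 2) * (real m + 1) ^ (d - 1) \<le> L r / r"
      using r by (simp add: L_div)
  qed
qed

lemma origin_edge_prob_le_lam: "origin_edge_prob lam z \<le> ennreal (lam (real_of_int (supnorm z)))"
  using exp_ge_add_one_self[of "- lam (real_of_int (supnorm z))"]
  by (simp add: origin_edge_prob_def ennreal_leI)

lemma expected_degree_le_shell_sum: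
  assumes lam_nonneg: "\<forall>r>0. 0 \<le> lam r"
  shows "expected_degree lam TYPE('d::finite)
    \<le> (\<Sum>n. ennreal (if n = 0 then 0 else lam (real n) * real (card (shell n :: ('d \<Rightarrow> int) set))))"
proof -
  let ?I = "\<lambda>n. \<integral>\<^sup>+z. origin_edge_prob lam z * indicator (shell n) (z :: 'd \<Rightarrow> int) \<partial>count_space UNIV"
  have split: "origin_edge_prob lam z = (\<Sum>n. origin_edge_prob lam z * indicator (shell n) z)" for z :: "'d \<Rightarrow> int"
  proof -
    have "origin_edge_prob lam z * indicator (shell n) z = (if n = nat (supnorm z) then origin_edge_prob lam z else 0)" for n
      using supnorm_nonneg[of z] by (auto simp: shell_def)
    then show ?thesis
      using sums_single[of "nat (supnorm z)" "\<lambda>_. origin_edge_prob lam z"] by (simp add: sums_iff)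
  qed
  have shell_bound: "?I n \<le> ennreal (if n = 0 then 0 else lam (real n) * real (card (shell n :: ('d \<Rightarrow> int) set)))" for n
  proof (cases "n = 0")
    case True
    then have "shell n = {(\<lambda>_. 0) :: 'd \<Rightarrow> int}" using supnorm_pos by (fastforce simp: shell_def supnorm_def)
    then show ?thesis by (simp add: nn_integral_indicator_singleton origin_edge_prob_def)
  next
    case False
    have "?I n \<le> (\<integral>\<^sup>+z. ennreal (lam (real n)) * indicator (shell n) (z :: 'd \<Rightarrow> int) \<partial>count_space UNIV)"
    proof (rule nn_integral_mono)
      fix z :: "'d \<Rightarrow> int"
      show "origin_edge_prob lam z * indicator (shell n) z \<le> ennreal (lam (real n)) * indicator (shell n) z"
        using origin_edge_prob_le_lam[of lam z] by (auto simp: shell_def split: split_indicator)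
    qed
    then show ?thesis
      using False lam_nonneg by (simp add: nn_integral_cmult_indicator ennreal_mult ennreal_of_nat_eq_real_of_nat)
  qed
  have "expected_degree lam TYPE('d)
      = (\<integral>\<^sup>+z. (\<Sum>n. origin_edge_prob lam z * indicator (shell n) (z :: 'd \<Rightarrow> int)) \<partial>count_space UNIV)"
    unfolding expected_degree_def by (rule nn_integral_cong) (rule split)
  also have "\<dots> = (\<Sum>n. ?I n)"
    by (rule nn_integral_suminf) simp
  also have "\<dots> \<le> (\<Sum>n. ennreal (if n = 0 then 0 else lam (real n) * real (card (shell n :: ('d \<Rightarrow> int) set))))"
    by (intro suminf_le shell_bound) simp_all
  finally show ?thesis .
qed

lemma expected_degree_finite:
  assumes lam_nonneg: "\<forall>r>0. 0 \<le> lam r"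
    and summable: "summable (\<lambda>m. lam (real m + 2) * (real m + 1) ^ (CARD('d) - 1))"
  shows "expected_degree lam TYPE('d::finite) < \<infinity>"
proof -
  let ?d = "CARD('d)"
  define t where "t n = (if n = 0 then 0 else lam (real n) * real (card (shell n :: ('d \<Rightarrow> int) set)))" for n
  have t_nonneg: "0 \<le> t n" for n
    using lam_nonneg by (simp add: t_def)
  have "summable (\<lambda>m. t (m + 2))"
  proof (rule summable_comparison_test')
    show "summable (\<lambda>m. (2 * real ?d * 5 ^ (?d - 1)) * (lam (real m + 2) * (real m + 1) ^ (?d - 1)))"
      using summable by (rule summable_mult)
    fix m :: nat
    have "(2 * real (m + 2) + 1) ^ (?d - 1) \<le> (5 * (real m + 1)) ^ (?d - 1)"
      by (intro power_mono) auto
    then have "real (card (shell (m + 2) :: ('d \<Rightarrow> int) set)) \<le> 2 * real ?d * (5 * (real m + 1)) ^ (?d - 1)"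
      using card_shell_le[of "m + 2", where 'd = 'd] by (simp add: order_trans[OF _ mult_left_mono])
    then have "norm (t (m + 2)) \<le> lam (real m + 2) * (2 * real ?d * (5 * (real m + 1)) ^ (?d - 1))"
      using lam_nonneg t_nonneg[of "m + 2"] by (simp add: t_def add.commute mult_left_mono)
    also have "\<dots> = (2 * real ?d * 5 ^ (?d - 1)) * (lam (real m + 2) * (real m + 1) ^ (?d - 1))"
      by (simp only: power_mult_distrib mult_ac)
    finally show "norm (t (m + 2)) \<le> (2 * real ?d * 5 ^ (?d - 1)) * (lam (real m + 2) * (real m + 1) ^ (?d - 1))" .
  qed
  then have "summable t" by (rule summable_iff_shift[THEN iffD1])
  have "expected_degree lam TYPE('d) \<le> (\<Sum>n. ennreal (t n))"
    unfolding t_def using lam_nonneg by (rule expected_degree_le_shell_sum)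
  also have "\<dots> = ennreal (suminf t)"
    using t_nonneg \<open>summable t\<close> by (rule suminf_ennreal2)
  finally show ?thesis by (simp add: order.strict_trans1)
qed

section \<open>Exponential growth of balls\<close>

lemma nn_integral_ball_size_le_power:
  assumes "\<forall>r>0. 0 \<le> lam r" and "expected_degree lam TYPE('d::finite) = ennreal m" and "0 \<le> m"
  shows "(\<integral>\<^sup>+\<omega>. ball_size k (\<omega> :: ('d \<Rightarrow> int) set \<Rightarrow> bool) \<partial>lrp lam) \<le> ennreal ((m + 1) ^ k)"
proof -
  have "(\<integral>\<^sup>+\<omega>. ball_size k (\<omega> :: ('d \<Rightarrow> int) set \<Rightarrow> bool) \<partial>lrp lam) \<le> (\<Sum>j\<le>k. expected_open_saws lam TYPE('d) j)"
    using assms(1) by (rule nn_integral_ball_size_le_sum)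
  also have "\<dots> \<le> (\<Sum>j\<le>k. ennreal m ^ j)"
    using expected_open_saws_le_power[of lam _, where 'd = 'd] assms(2) by (intro sum_mono) simp
  also have "\<dots> = ennreal (\<Sum>j\<le>k. m ^ j)"
    using assms(3) by (simp add: ennreal_power)
  also have "\<dots> \<le> ennreal ((m + 1) ^ k)"
    using assms(3) by (intro ennreal_leI sum_power_le_Suc_power)
  finally show ?thesis .
qed

lemma limsup_eroot_le:
  assumes "\<And>k. E k \<le> ennreal (A ^ k)" and "0 \<le> A"
  shows "limsup (\<lambda>k. eroot k (E k)) \<le> ereal A"
proof (rule Limsup_bounded, rule eventually_sequentiallyI)
  fix k :: nat assume "1 \<le> k"
  have "E k \<noteq> \<infinity>" using assms(1)[of k] by (auto simp: top_unique)
  have "enn2real (E k) \<le> A ^ k"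
    using enn2real_mono[OF assms(1)[of k]] assms(2) by simp
  then have "root k (enn2real (E k)) \<le> root k (A ^ k)"
    using \<open>1 \<le> k\<close> by (intro real_root_le_mono) auto
  also have "root k (A ^ k) = A"
    using \<open>1 \<le> k\<close> assms(2) by (simp add: real_root_pos2)
  finally show "eroot k (E k) \<le> ereal A"
    using \<open>1 \<le> k\<close> \<open>E k \<noteq> \<infinity>\<close> by (simp add: eroot_def root_powr_inverse)
qed

lemma (in prob_space) prob_less_power_tendsto_one:
  assumes meas: "\<And>k. X k \<in> borel_measurable M"
    and bound: "\<And>k. (\<integral>\<^sup>+x. X k x \<partial>M) \<le> ennreal (A ^ k)"
    and "0 \<le> A" "A < a"
  shows "(\<lambda>k. prob {x \<in> space M. X k x < ennreal (a ^ k)}) \<longlonglongrightarrow> 1"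
proof -
  have a: "0 < a" using assms(3,4) by simp
  define C where "C k = {x \<in> space M. ennreal (a ^ k) \<le> X k x}" for k
  have sets_C: "C k \<in> events" for k
    unfolding C_def using meas by measurable
  have prob_C: "prob (C k) \<le> (A / a) ^ k" for k
  proof -
    have "ennreal (a ^ k * prob (C k)) = (\<integral>\<^sup>+x. ennreal (a ^ k) * indicator (C k) x \<partial>M)"
      using a by (simp add: nn_integral_cmult_indicator sets_C emeasure_eq_measure ennreal_mult)
    also have "\<dots> \<le> (\<integral>\<^sup>+x. X k x \<partial>M)"
      by (rule nn_integral_mono) (auto simp: C_def split: split_indicator)
    also have "\<dots> \<le> ennreal (A ^ k)"
      by (rule bound)
    finally have "a ^ k * prob (C k) \<le> A ^ k"
      using assms(3) by (simp add: ennreal_le_iff)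
    then show ?thesis
      using a by (simp add: power_divide field_simps)
  qed
  have compl: "prob {x \<in> space M. X k x < ennreal (a ^ k)} = 1 - prob (C k)" for k
  proof -
    have "{x \<in> space M. X k x < ennreal (a ^ k)} = space M - C k" by (auto simp: C_def not_le)
    then show ?thesis using prob_compl[OF sets_C] by simp
  qed
  show ?thesis
  proof (rule tendsto_sandwich[of "\<lambda>k. 1 - (A / a) ^ k" _ _ "\<lambda>_. 1"])
    show "\<forall>\<^sub>F k in sequentially. 1 - (A / a) ^ k \<le> prob {x \<in> space M. X k x < ennreal (a ^ k)}"
      using prob_C by (simp add: compl)
    show "\<forall>\<^sub>F k in sequentially. prob {x \<in> space M. X k x < ennreal (a ^ k)} \<le> 1"
      by simp
    have "(\<lambda>k. (A / a) ^ k) \<longlonglongrightarrow> 0" using assms(3,4) by (intro LIMSEQ_power_zero) simp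
    then show "(\<lambda>k. 1 - (A / a) ^ k) \<longlonglongrightarrow> 1" using tendsto_diff[OF tendsto_const[of 1]] by fastforce
  qed simp
qed

lemma ball_small_iff_ball_size_less:
  assumes "1 \<le> k" "0 < a"
  shows "(finite (ball k \<omega>) \<and> real (card (ball k \<omega>)) powr (1 / real k) < a) \<longleftrightarrow> ball_size k \<omega> < ennreal (a ^ k)"
proof (cases "finite (ball k \<omega>)")
  case True
  have "root k (a ^ k) = a"
    using assms by (simp add: real_root_pos2)
  then have "real (card (ball k \<omega>)) powr (1 / real k) < a \<longleftrightarrow> root k (card (ball k \<omega>)) < root k (a ^ k)"
    using assms by (simp add: root_powr_inverse)
  also have "\<dots> \<longleftrightarrow> real (card (ball k \<omega>)) < a ^ k"
    using assms by (simp add: real_root_less_iff)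
  also have "\<dots> \<longleftrightarrow> ball_size k \<omega> < ennreal (a ^ k)"
    using True assms by (simp add: ball_size_def ennreal_of_nat_eq_real_of_nat ennreal_less_iff)
  finally show ?thesis using True by simp
qed (simp add: ball_size_def)

lemma prob_ball_root_less_tendsto_one:
  assumes "\<forall>r>0. 0 \<le> lam r" and "expected_degree lam TYPE('d::finite) = ennreal m" and "0 \<le> m"
  shows "(\<lambda>k. measure (lrp lam) {\<omega> \<in> space (lrp lam).
      finite (ball k (\<omega> :: ('d \<Rightarrow> int) set \<Rightarrow> bool)) \<and> real (card (ball k \<omega>)) powr (1 / real k) < m + 2})
    \<longlonglongrightarrow> 1"
proof -
  interpret prob_space "lrp lam :: (('d \<Rightarrow> int) set \<Rightarrow> bool) measure" by (rule prob_space_lrp)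
  have "(\<lambda>k. prob {\<omega> \<in> space (lrp lam). ball_size k \<omega> < ennreal ((m + 2) ^ k)}) \<longlonglongrightarrow> 1"
    using assms(3)
    by (intro prob_less_power_tendsto_one[OF borel_measurable_ball_size nn_integral_ball_size_le_power[OF assms]])
      simp_all
  moreover have "\<forall>\<^sub>F k in sequentially.
      prob {\<omega> \<in> space (lrp lam). ball_size k \<omega> < ennreal ((m + 2) ^ k)}
      = prob {\<omega> \<in> space (lrp lam). finite (ball k \<omega>) \<and> real (card (ball k \<omega>)) powr (1 / real k) < m + 2}"
  proof (rule eventually_sequentiallyI[of 1])
    fix k :: nat assume "1 \<le> k"
    moreover have "0 < m + 2" using assms(3) by simp
    ultimately show "prob {\<omega> \<in> space (lrp lam). ball_size k \<omega> < ennreal ((m + 2) ^ k)}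
      = prob {\<omega> \<in> space (lrp lam). finite (ball k \<omega>) \<and> real (card (ball k \<omega>)) powr (1 / real k) < m + 2}"
      by (simp add: ball_small_iff_ball_size_less)
  qed
  ultimately show ?thesis by (rule Lim_transform_eventually)
qed

theorem lemma3p3:
  fixes lam L :: "real \<Rightarrow> real"
  assumes L_pos: "\<forall>r>0. L r > 0"
    and L_sv: "slowly_varying L"
    and L_int: "(\<integral>\<^sup>+ r. ennreal (L r / r) * indicator {1..} r \<partial>lborel) < \<infinity>"
    and lam_def: "\<forall>r>0. lam r = r powr (- real CARD('d::finite)) * L r"
    and lam_noninc: "\<forall>r s. 0 < r \<longrightarrow> r \<le> s \<longrightarrow> lam s \<le> lam r"
    and percolating: "measure (lrp lam) {\<omega> \<in> space (lrp lam). infinite (cluster (\<omega> :: ('d \<Rightarrow> int) set \<Rightarrow> bool))} > 0"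
  shows "\<exists>a2::real. a2 > 0 \<and>
           limsup (\<lambda>k. eroot k (\<integral>\<^sup>+ \<omega>. ball_size k (\<omega> :: ('d \<Rightarrow> int) set \<Rightarrow> bool) \<partial>lrp lam)) < ereal a2 \<and>
           ((\<lambda>k. measure (lrp lam) {\<omega> \<in> space (lrp lam).
                 finite (ball k (\<omega> :: ('d \<Rightarrow> int) set \<Rightarrow> bool)) \<and> real (card (ball k \<omega>)) powr (1 / real k) < a2})
             \<longlonglongrightarrow> 1)"
proof -
  have lam_nonneg: "\<forall>r>0. 0 \<le> lam r" using L_pos lam_def by (simp add: less_imp_le)
  have "summable (\<lambda>m. lam (real m + 2) * (real m + 1) ^ (CARD('d) - 1))"
    using L_pos L_int lam_def lam_noninc by (rule summable_lam_times_power) simp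
  then have "expected_degree lam TYPE('d) < \<infinity>"
    using lam_nonneg by (intro expected_degree_finite)
  then obtain m where m: "expected_degree lam TYPE('d) = ennreal m" "0 \<le> m"
    using ennreal_cases[of "expected_degree lam TYPE('d)"] by auto
  have "limsup (\<lambda>k. eroot k (\<integral>\<^sup>+\<omega>. ball_size k (\<omega> :: ('d \<Rightarrow> int) set \<Rightarrow> bool) \<partial>lrp lam))
      \<le> ereal (m + 1)"
    using nn_integral_ball_size_le_power[OF lam_nonneg m] m(2) by (intro limsup_eroot_le) simp_all
  moreover note prob_ball_root_less_tendsto_one[OF lam_nonneg m]
  ultimately show ?thesis
    using m(2) by (intro exI[of _ "m + 2"]) (auto intro: order.strict_trans1)
qed

end
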